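(* Let $k\ge3$ and let $S'$ be a finite poset having an induced sub-poset isomorphic to the $k$-crown. Then there exists a stochastically monotone generator on $S'$ which is not realizably monotone.
   Context: The $k$-crown is the poset on $2k$ elements $x_1,\dots,x_k,y_1,\dots,y_k$ whose only strict relations are $x_i<y_i$ and $x_i<y_{i-1}$ for $i=1,\dots,k$ (indices modulo $k$). A generator on a finite poset $S$ is a matrix $L$ with $L_{x,y}\ge0$ for $x\ne y$ and rows summing to $0$; $L_{x,\Gamma}=\sum_{z\in\Gamma}L_{x,z}$. $L$ is stochastically monotone iff for every up-set $\Gamma$ and $x\le y\notin\Gamma$, $L_{x,\Gamma}\le L_{y,\Gamma}$, and for every down-set $\Gamma$ and $y\ge x\notin\Gamma$, $L_{x,\Gamma}\ge L_{y,\Gamma}$. $L$ is realizably monotone iff there exists $\Lambda:\mathcal M\to[0,\infty)$, $\mathcal M$ the set of increasing maps $S\to S$, with $L_{x,y}=\sum_{f\in\mathcal M:f(x)=y}\Lambda(f)$ for all $x\ne y$. An induced sub-poset is a subset with the restricted order. *)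

theory Defs
  imports Complex_Main
begin

text \<open>The k-crown: elements Inl i (= x_i) and Inr i (= y_i) for i < k, indices taken
  modulo k (0-based, so y_{i-1} is y_{(i+k-1) mod k}).\<close>

definition crown_set :: "nat \<Rightarrow> (nat + nat) set" where
  "crown_set k = Inl ` {..<k} \<union> Inr ` {..<k}"

definition crown_le :: "nat \<Rightarrow> (nat + nat) \<Rightarrow> (nat + nat) \<Rightarrow> bool" where
  "crown_le k a b \<longleftrightarrow> a = b \<or>
     (\<exists>i<k. a = Inl i \<and> (b = Inr i \<or> b = Inr ((i + k - 1) mod k)))"

definition has_induced_crown :: "nat \<Rightarrow> 'a::order itself \<Rightarrow> bool" where
  "has_induced_crown k _ \<longleftrightarrow>
     (\<exists>\<phi> :: nat + nat \<Rightarrow> 'a. inj_on \<phi> (crown_set k) \<and>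
        (\<forall>a\<in>crown_set k. \<forall>b\<in>crown_set k. (\<phi> a \<le> \<phi> b \<longleftrightarrow> crown_le k a b)))"

definition up_set :: "'a::order set \<Rightarrow> bool" where
  "up_set \<Gamma> \<longleftrightarrow> (\<forall>x y. x \<in> \<Gamma> \<longrightarrow> x \<le> y \<longrightarrow> y \<in> \<Gamma>)"

definition down_set :: "'a::order set \<Rightarrow> bool" where
  "down_set \<Gamma> \<longleftrightarrow> (\<forall>x y. x \<in> \<Gamma> \<longrightarrow> y \<le> x \<longrightarrow> y \<in> \<Gamma>)"

definition rate_to :: "('a \<Rightarrow> 'a \<Rightarrow> real) \<Rightarrow> 'a \<Rightarrow> 'a set \<Rightarrow> real" where
  "rate_to L x \<Gamma> = (\<Sum>z\<in>\<Gamma>. L x z)"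

definition generator :: "('a::finite \<Rightarrow> 'a \<Rightarrow> real) \<Rightarrow> bool" where
  "generator L \<longleftrightarrow> (\<forall>x y. x \<noteq> y \<longrightarrow> L x y \<ge> 0) \<and> (\<forall>x. (\<Sum>y\<in>UNIV. L x y) = 0)"

definition stoch_monotone :: "('a::{finite,order} \<Rightarrow> 'a \<Rightarrow> real) \<Rightarrow> bool" where
  "stoch_monotone L \<longleftrightarrow>
     (\<forall>\<Gamma> x y. up_set \<Gamma> \<longrightarrow> x \<le> y \<longrightarrow> y \<notin> \<Gamma> \<longrightarrow> rate_to L x \<Gamma> \<le> rate_to L y \<Gamma>) \<and>
     (\<forall>\<Gamma> x y. down_set \<Gamma> \<longrightarrow> x \<le> y \<longrightarrow> x \<notin> \<Gamma> \<longrightarrow> rate_to L x \<Gamma> \<ge> rate_to L y \<Gamma>)"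

definition realizably_monotone :: "('a::{finite,order} \<Rightarrow> 'a \<Rightarrow> real) \<Rightarrow> bool" where
  "realizably_monotone L \<longleftrightarrow>
     (\<exists>\<Lambda> :: ('a \<Rightarrow> 'a) \<Rightarrow> real. (\<forall>f. \<Lambda> f \<ge> 0) \<and>
        (\<forall>x y. x \<noteq> y \<longrightarrow> L x y = (\<Sum>f\<in>{f. mono f \<and> f x = y}. \<Lambda> f)))"

end

theory Submission
  imports Defs
begin

text \<open>Take \<open>a = x\<^sub>0 < b = y\<^sub>0\<close> in the crown and let \<open>L\<close> jump at rate 1 to \<open>a\<close> from the points
  of \<open>\<down>b - \<down>a\<close>, and at rate 1 to \<open>b\<close> from a set of points chosen so that the rates
  into up-sets and down-sets behave monotonically. In a realization by monotone maps,
  every map of positive weight moves a point only to \<open>a\<close> or \<open>b\<close> along a positive rate. A map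
  sending \<open>y\<^sub>0\<close> to \<open>x\<^sub>0\<close> must then send \<open>x\<^sub>1\<close> to \<open>x\<^sub>0\<close> and hence \<open>y\<^sub>1\<close> to \<open>y\<^sub>0\<close>; a map sending
  \<open>x\<^sub>0\<close> to \<open>y\<^sub>0\<close> propagates the value \<open>y\<^sub>0\<close> along the fence
  \<open>x\<^sub>0 < y\<^sub>k\<^sub>-\<^sub>1 > x\<^sub>k\<^sub>-\<^sub>1 < \<dots> > x\<^sub>2 < y\<^sub>1\<close>, whose points are incomparable to \<open>y\<^sub>0\<close>, so it too
  sends \<open>y\<^sub>1\<close> to \<open>y\<^sub>0\<close>. The two disjoint families carrying the unit rates \<open>L(y\<^sub>0,x\<^sub>0)\<close> and
  \<open>L(x\<^sub>0,y\<^sub>0)\<close> would thus both be contained in the family carrying the unit rate \<open>L(y\<^sub>1,y\<^sub>0)\<close>.\<close>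

definition down_jump_set :: "'a::order \<Rightarrow> 'a \<Rightarrow> 'a set" where
  "down_jump_set a b = {s. s \<le> b \<and> \<not> s \<le> a}"

definition up_jump_set :: "'a::order \<Rightarrow> 'a \<Rightarrow> 'a set" where
  "up_jump_set a b = {s. \<not> s < a \<and> \<not> b \<le> s \<and> (s \<le> b \<longrightarrow> a \<le> s)}"

definition two_target_generator :: "'a::order \<Rightarrow> 'a \<Rightarrow> 'a \<Rightarrow> 'a \<Rightarrow> real" where
  "two_target_generator a b s t =
     (if t = a then of_bool (s \<in> down_jump_set a b) else 0) +
     (if t = b then of_bool (s \<in> up_jump_set a b) else 0) -
     (if t = s then of_bool (s \<in> down_jump_set a b) + of_bool (s \<in> up_jump_set a b) else 0)"

lemma two_target_generator_off_diag:
  "s \<noteq> t \<Longrightarrow> two_target_generator a b s t =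
     (if t = a then of_bool (s \<in> down_jump_set a b) else 0) +
     (if t = b then of_bool (s \<in> up_jump_set a b) else 0)"
  by (simp add: two_target_generator_def)

lemma generator_two_target_generator:
  "generator (two_target_generator (a::'a::{finite,order}) b)"
  unfolding generator_def
  by (simp add: two_target_generator_def sum.distrib sum_subtractf)

lemma rate_to_two_target_generator:
  fixes a b :: "'a::{finite,order}"
  assumes "x \<notin> \<Gamma>"
  shows "rate_to (two_target_generator a b) x \<Gamma> =
     (if a \<in> \<Gamma> then of_bool (x \<in> down_jump_set a b) else 0) +
     (if b \<in> \<Gamma> then of_bool (x \<in> up_jump_set a b) else 0)"
proof -
  have "rate_to (two_target_generator a b) x \<Gamma> =
      (\<Sum>z\<in>\<Gamma>. (if z = a then of_bool (x \<in> down_jump_set a b) else 0) +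
               (if z = b then of_bool (x \<in> up_jump_set a b) else 0))"
    unfolding rate_to_def using assms by (intro sum.cong refl two_target_generator_off_diag) blast
  then show ?thesis
    by (simp add: sum.distrib)
qed

lemma stoch_monotone_two_target_generator:
  fixes a b :: "'a::{finite,order}"
  assumes "a \<le> b"
  shows "stoch_monotone (two_target_generator a b)"
proof -
  let ?D = "down_jump_set a b" and ?U = "up_jump_set a b"
  let ?exit = "\<lambda>s. of_bool (s \<in> ?D) + of_bool (s \<in> ?U) :: real"
  have exit_up: "?exit x \<le> ?exit y" if "x \<le> y" "\<not> a \<le> y" for x y
    using assms that unfolding down_jump_set_def up_jump_set_def
    by (smt (verit) of_bool_eq order.trans order_less_le mem_Collect_eq)
  have exit_down: "?exit y \<le> ?exit x" if "x \<le> y" "\<not> x \<le> b" for x y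
    using assms that unfolding down_jump_set_def up_jump_set_def
    by (smt (verit) of_bool_eq order.trans order_less_le mem_Collect_eq)
  have U_up: "y \<in> ?U" if "x \<le> y" "\<not> b \<le> y" "x \<in> ?U" for x y
    using that unfolding up_jump_set_def by (auto dest: order.trans order_le_less_trans)
  have D_down: "x \<in> ?D" if "x \<le> y" "\<not> x \<le> a" "y \<in> ?D" for x y
    using that unfolding down_jump_set_def by (auto dest: order.trans)
  show ?thesis
    unfolding stoch_monotone_def
  proof (intro conjI allI impI)
    fix \<Gamma> and x y :: 'a
    assume up: "up_set \<Gamma>" and "x \<le> y" "y \<notin> \<Gamma>"
    then have "x \<notin> \<Gamma>" "a \<in> \<Gamma> \<Longrightarrow> b \<in> \<Gamma> \<and> \<not> a \<le> y" "b \<in> \<Gamma> \<Longrightarrow> \<not> b \<le> y"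
      using assms unfolding up_set_def by blast+
    then show "rate_to (two_target_generator a b) x \<Gamma> \<le> rate_to (two_target_generator a b) y \<Gamma>"
      using exit_up[OF \<open>x \<le> y\<close>] U_up[OF \<open>x \<le> y\<close>] \<open>y \<notin> \<Gamma>\<close>
      by (simp add: rate_to_two_target_generator)
  next
    fix \<Gamma> and x y :: 'a
    assume down: "down_set \<Gamma>" and "x \<le> y" "x \<notin> \<Gamma>"
    then have "y \<notin> \<Gamma>" "b \<in> \<Gamma> \<Longrightarrow> a \<in> \<Gamma> \<and> \<not> x \<le> b" "a \<in> \<Gamma> \<Longrightarrow> \<not> x \<le> a"
      using assms unfolding down_set_def by blast+
    then show "rate_to (two_target_generator a b) x \<Gamma> \<ge> rate_to (two_target_generator a b) y \<Gamma>"
      using exit_down[OF \<open>x \<le> y\<close>] D_down[OF \<open>x \<le> y\<close>] \<open>x \<notin> \<Gamma>\<close>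
      by (simp add: rate_to_two_target_generator)
  qed
qed

definition realizes :: "(('a::{finite,order} \<Rightarrow> 'a) \<Rightarrow> real) \<Rightarrow> ('a \<Rightarrow> 'a \<Rightarrow> real) \<Rightarrow> bool" where
  "realizes \<Lambda> L \<longleftrightarrow> (\<forall>f. \<Lambda> f \<ge> 0) \<and> (\<forall>x y. x \<noteq> y \<longrightarrow> L x y = (\<Sum>f\<in>{f. mono f \<and> f x = y}. \<Lambda> f))"

lemma realizably_monotone_iff_realizes: "realizably_monotone L \<longleftrightarrow> (\<exists>\<Lambda>. realizes \<Lambda> L)"
  by (simp add: realizably_monotone_def realizes_def)

lemma realizes_moves_along_rates:
  assumes "realizes \<Lambda> L" "mono f" "\<Lambda> f \<noteq> 0" "f p \<noteq> p"
  shows "L p (f p) > 0"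
proof -
  have "0 < \<Lambda> f"
    using assms(1,3) unfolding realizes_def by (metis order_less_le)
  also have "\<Lambda> f \<le> (\<Sum>g\<in>{g. mono g \<and> g p = f p}. \<Lambda> g)"
    using assms(1,2) unfolding realizes_def by (intro member_le_sum) auto
  also have "\<dots> = L p (f p)"
    using assms(1,4) unfolding realizes_def by metis
  finally show ?thesis .
qed

lemma realizes_two_target_generator_moves:
  assumes "realizes \<Lambda> (two_target_generator a b)" "mono f" "\<Lambda> f \<noteq> 0"
  shows "f p = p \<or> (f p = a \<and> p \<in> down_jump_set a b) \<or> (f p = b \<and> p \<in> up_jump_set a b)"
  using realizes_moves_along_rates[of \<Lambda> _ f p, OF assms]
  by (cases "f p = p") (auto simp: two_target_generator_off_diag split: if_splits)

definition fence_step :: "'a::order \<Rightarrow> 'a \<Rightarrow> 'a \<Rightarrow> bool" where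
  "fence_step b p q \<longleftrightarrow> (p \<le> q \<and> \<not> b \<le> q) \<or> (q \<le> p \<and> \<not> q \<le> b)"

lemma mono_fiber_closed_under_fence_steps:
  assumes "mono f"
    and above: "\<And>p. b \<le> f p \<Longrightarrow> \<not> b \<le> p \<Longrightarrow> f p = b"
    and below: "\<And>p. f p \<le> b \<Longrightarrow> \<not> p \<le> b \<Longrightarrow> f p = b"
    and "(fence_step b)\<^sup>*\<^sup>* p q" "f p = b"
  shows "f q = b"
  using assms(4,5)
proof induction
  case (step q r)
  then show ?case
    using above below monoD[OF \<open>mono f\<close>] unfolding fence_step_def by metis
qed

lemma realizes_two_target_generator_fence:
  assumes "realizes \<Lambda> (two_target_generator a b)" "mono f" "\<Lambda> f \<noteq> 0" "\<not> b \<le> a"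
    and "(fence_step b)\<^sup>*\<^sup>* p q" "f p = b"
  shows "f q = b"
proof (rule mono_fiber_closed_under_fence_steps[OF assms(2) _ _ assms(5,6)])
  fix p
  have "f p = p \<or> (f p = a \<and> p \<le> b) \<or> f p = b"
    using realizes_two_target_generator_moves[of \<Lambda> a b f p, OF assms(1-3)] unfolding down_jump_set_def by blast
  then show "b \<le> f p \<Longrightarrow> \<not> b \<le> p \<Longrightarrow> f p = b" "f p \<le> b \<Longrightarrow> \<not> p \<le> b \<Longrightarrow> f p = b"
    using assms(4) by auto
qed

lemma realizes_two_target_generator_via_down_jump:
  assumes "realizes \<Lambda> (two_target_generator a b)" "mono f" "\<Lambda> f \<noteq> 0" "\<not> b \<le> a"
    and "f b = a" "p \<in> down_jump_set a b" "p \<le> c" "\<not> a \<le> c" "\<not> c \<le> b"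
  shows "f c = b"
proof -
  note moves = realizes_two_target_generator_moves[of \<Lambda> a b f, OF assms(1-3)]
  have "f p \<le> a"
    using monoD[OF assms(2), of p b] assms(5,6) unfolding down_jump_set_def by simp
  then have "f p = a"
    using moves[of p] assms(4,6) unfolding down_jump_set_def by auto
  then have "a \<le> f c"
    using monoD[OF assms(2,7)] by simp
  then show "f c = b"
    using moves[of c] assms(8,9) unfolding down_jump_set_def by auto
qed

lemma sum_le_sum_if_support_subset:
  fixes \<Lambda> :: "'a \<Rightarrow> 'b::ordered_comm_monoid_add"
  assumes "finite A" "finite B" "\<And>f. \<Lambda> f \<ge> 0" "\<And>f. f \<in> A \<Longrightarrow> \<Lambda> f \<noteq> 0 \<Longrightarrow> f \<in> B"
  shows "sum \<Lambda> A \<le> sum \<Lambda> B"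
proof -
  have "sum \<Lambda> A = sum \<Lambda> (A \<inter> B)"
    using assms(1,4) by (intro sum.mono_neutral_right) auto
  also have "\<dots> \<le> sum \<Lambda> B"
    using assms(2,3) by (intro sum_mono2) auto
  finally show ?thesis .
qed

locale crown_embedding =
  fixes k :: nat and x y :: "nat \<Rightarrow> 'a::order"
  assumes three_le_k: "3 \<le> k"
    and x_le_y_iff: "i < k \<Longrightarrow> j < k \<Longrightarrow> x i \<le> y j \<longleftrightarrow> j = i \<or> j = (i + k - 1) mod k"
    and not_y_le_x: "i < k \<Longrightarrow> j < k \<Longrightarrow> \<not> y i \<le> x j"
    and x_le_x_iff: "i < k \<Longrightarrow> j < k \<Longrightarrow> x i \<le> x j \<longleftrightarrow> i = j"
    and y_le_y_iff: "i < k \<Longrightarrow> j < k \<Longrightarrow> y i \<le> y j \<longleftrightarrow> i = j"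

lemma has_induced_crown_embedding:
  assumes "has_induced_crown k TYPE('a)" "3 \<le> k"
  obtains x y :: "nat \<Rightarrow> 'a::order" where "crown_embedding k x y"
proof -
  from assms(1) obtain \<phi> :: "nat + nat \<Rightarrow> 'a" where
    \<phi>: "\<And>u v. u \<in> crown_set k \<Longrightarrow> v \<in> crown_set k \<Longrightarrow> \<phi> u \<le> \<phi> v \<longleftrightarrow> crown_le k u v"
    unfolding has_induced_crown_def by blast
  have "crown_embedding k (\<phi> \<circ> Inl) (\<phi> \<circ> Inr)"
    by unfold_locales (use assms(2) in \<open>auto simp: \<phi> crown_set_def crown_le_def\<close>)
  then show thesis ..
qed

lemma add_pred_mod_self: "0 < i \<Longrightarrow> i < (k::nat) \<Longrightarrow> (i + k - 1) mod k = i - 1"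
proof -
  assume "0 < i" "i < k"
  then have "i + k - 1 = (i - 1) + k" by simp
  then show ?thesis using \<open>i < k\<close> by (simp only: mod_add_self2) simp
qed

context crown_embedding
begin

lemma x_le_y: "i < k \<Longrightarrow> x i \<le> y i"
  using x_le_y_iff by blast

lemma x_le_y_pred: "0 < i \<Longrightarrow> i < k \<Longrightarrow> x i \<le> y (i - 1)"
  using x_le_y_iff[of i "i - 1"] add_pred_mod_self[of i k] by simp

lemma not_x_le_y0: "2 \<le> i \<Longrightarrow> i < k \<Longrightarrow> \<not> x i \<le> y 0"
  using x_le_y_iff[of i 0] add_pred_mod_self[of i k] by simp

lemma fence_y_pred: "2 \<le> i \<Longrightarrow> i < k \<Longrightarrow> (fence_step (y 0))\<^sup>*\<^sup>* (y i) (y (i - 1))"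
proof -
  assume i: "2 \<le> i" "i < k"
  have "fence_step (y 0) (y i) (x i)"
    using x_le_y[of i] not_x_le_y0 i unfolding fence_step_def by simp
  moreover have "fence_step (y 0) (x i) (y (i - 1))"
    using x_le_y_pred[of i] y_le_y_iff[of 0 "i - 1"] i unfolding fence_step_def by simp
  ultimately show ?thesis
    by (blast intro: converse_rtranclp_into_rtranclp)
qed

lemma fence_x0_y1: "(fence_step (y 0))\<^sup>*\<^sup>* (x 0) (y 1)"
proof -
  have "(fence_step (y 0))\<^sup>*\<^sup>* (y i) (y 1)" if "1 \<le> i" "i < k" for i
    using that
  proof (induction i rule: nat_induct_at_least)
    case (Suc i)
    have "(fence_step (y 0))\<^sup>*\<^sup>* (y (Suc i)) (y i)"
      using fence_y_pred[of "Suc i"] Suc by simp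
    then show ?case
      using Suc by (metis Suc_lessD rtranclp_trans)
  qed simp
  then have "(fence_step (y 0))\<^sup>*\<^sup>* (y (k - 1)) (y 1)"
    using three_le_k by simp
  moreover have "fence_step (y 0) (x 0) (y (k - 1))"
    using x_le_y_iff[of 0 "k - 1"] y_le_y_iff[of 0 "k - 1"] three_le_k unfolding fence_step_def by simp
  ultimately show ?thesis
    by (rule converse_rtranclp_into_rtranclp[rotated])
qed

end

lemma crown_two_target_generator_not_realizably_monotone:
  fixes x y :: "nat \<Rightarrow> 'a::{finite,order}"
  assumes "crown_embedding k x y"
  shows "\<not> realizably_monotone (two_target_generator (x 0) (y 0))"
proof
  interpret crown_embedding k x y by fact
  let ?a = "x 0" and ?b = "y 0" and ?c = "y 1"
  let ?L = "two_target_generator ?a ?b"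
  define F where "F p q = {f. mono f \<and> f p = q}" for p q :: 'a
  assume "realizably_monotone ?L"
  then obtain \<Lambda> where \<Lambda>: "realizes \<Lambda> ?L"
    by (auto simp: realizably_monotone_iff_realizes)
  have order: "?a \<le> ?b" "\<not> ?b \<le> ?a" "\<not> ?c \<le> ?b" "\<not> ?b \<le> ?c" "\<not> ?c \<le> ?a" "\<not> ?a \<le> ?c"
    "x 1 \<le> ?b" "x 1 \<le> ?c" "\<not> x 1 \<le> ?a"
    using three_le_k x_le_y_iff[of 0 0] x_le_y_iff[of 0 1] x_le_y_iff[of 1 0] x_le_y_iff[of 1 1]
      y_le_y_iff[of 0 1] y_le_y_iff[of 1 0] not_y_le_x[of 0 0] not_y_le_x[of 1 0] x_le_x_iff[of 1 0]
    by auto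
  have mass: "sum \<Lambda> (F p q) = ?L p q" if "p \<noteq> q" for p q
    using \<Lambda> that unfolding realizes_def F_def by simp
  have masses: "sum \<Lambda> (F ?b ?a) = 1" "sum \<Lambda> (F ?a ?b) = 1" "sum \<Lambda> (F ?c ?b) = 1"
    using mass order by (auto simp: two_target_generator_off_diag down_jump_set_def up_jump_set_def
      less_le_not_le)
  have pull: "f \<in> F ?c ?b" if "f \<in> F ?a ?b" "\<Lambda> f \<noteq> 0" for f
    using realizes_two_target_generator_fence[of \<Lambda> ?a ?b f, OF \<Lambda> _ that(2) order(2) fence_x0_y1] that
    unfolding F_def by blast
  have push: "f \<in> F ?c ?b" if "f \<in> F ?b ?a" "\<Lambda> f \<noteq> 0" for f
    using realizes_two_target_generator_via_down_jump[of \<Lambda> ?a ?b f,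
        OF \<Lambda> _ that(2) order(2) _ _ order(8)] that order unfolding F_def down_jump_set_def by auto
  have "\<not> (mono f \<and> f ?b = ?a \<and> f ?a = ?b)" for f
    using monoD[of f ?a ?b] order(1,2) by auto
  then have "F ?b ?a \<inter> F ?a ?b = {}"
    unfolding F_def by blast
  then have "2 = sum \<Lambda> (F ?b ?a \<union> F ?a ?b)"
    using masses by (simp add: sum.union_disjoint)
  also have "\<dots> \<le> sum \<Lambda> (F ?c ?b)"
    using \<Lambda> push pull unfolding realizes_def by (intro sum_le_sum_if_support_subset) auto
  finally show False
    using masses by simp
qed

theorem mainTheorem13:
  fixes k :: nat
  assumes "k \<ge> 3"
    and "has_induced_crown k TYPE('a::{finite,order})"
  shows "\<exists>L :: 'a \<Rightarrow> 'a \<Rightarrow> real. generator L \<and> stoch_monotone L \<and> \<not> realizably_monotone L"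
proof -
  obtain x y :: "nat \<Rightarrow> 'a" where crown: "crown_embedding k x y"
    using has_induced_crown_embedding assms(2,1) .
  then have "x 0 \<le> y 0"
    using crown_embedding.x_le_y[OF crown, of 0] assms(1) by simp
  then show ?thesis
    using generator_two_target_generator stoch_monotone_two_target_generator
      crown_two_target_generator_not_realizably_monotone[OF crown] by blast
qed

end
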